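(* Let $\psi$ be a mean on $L^{\infty}(\mathbb{R}_+^{\times})$. Then $\psi\in\mathcal{L}_1$ if and only if $\psi(f-Uf)=0$ for every $f\in L^{\infty}(\mathbb{R}_+^{\times})$; equivalently, $\psi\in\mathcal{L}_1$ if and only if $\psi(Uf)=\psi(f)$ for all $f\in L^{\infty}(\mathbb{R}_+^{\times})$.
   Context: $\mathbb{R}_+^{\times}=[1,\infty)$ and $L^{\infty}(\mathbb{R}_+^{\times})$ is the Banach space of real-valued essentially bounded measurable functions on it. A mean is a linear functional $\psi$ with $\psi(f)\ge0$ whenever $f\ge 0$ a.e. and $\psi(1)=1$. Define $\overline{L}_1(f)=\lim_{\theta\to\infty}\limsup_{x\to\infty}\frac{1}{\log\theta}\int_x^{\theta x}f(t)\frac{dt}{t}$ and let $\mathcal{L}_1$ be the set of means $\psi$ on $L^{\infty}(\mathbb{R}_+^{\times})$ with $\psi(f)\le\overline{L}_1(f)$ for all $f$. The operator $U$ on $L^{\infty}(\mathbb{R}_+^{\times})$ is $(Uf)(x)=\frac{1}{x}\int_1^x f(t)\,dt$. *)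

theory Defs
  imports "HOL-Analysis.Analysis"
begin

abbreviation Rplus :: "real measure" where
  "Rplus \<equiv> lebesgue_on {1..}"

text \<open>Representatives of elements of L-infinity on [1, infinity): measurable, essentially bounded.
  Functionals respecting positivity a.e. automatically respect a.e.-equality.\<close>
definition Linf :: "(real \<Rightarrow> real) set" where
  "Linf = {f. f \<in> borel_measurable Rplus \<and> (\<exists>C. AE x in Rplus. \<bar>f x\<bar> \<le> C)}"

definition is_mean :: "((real \<Rightarrow> real) \<Rightarrow> real) \<Rightarrow> bool" where
  "is_mean \<psi> \<longleftrightarrow>
     (\<forall>f\<in>Linf. \<forall>g\<in>Linf. \<psi> (\<lambda>x. f x + g x) = \<psi> f + \<psi> g) \<and>
     (\<forall>f\<in>Linf. \<forall>c::real. \<psi> (\<lambda>x. c * f x) = c * \<psi> f) \<and>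
     (\<forall>f\<in>Linf. (AE x in Rplus. 0 \<le> f x) \<longrightarrow> 0 \<le> \<psi> f) \<and>
     \<psi> (\<lambda>_. 1) = 1"

definition Lbar1 :: "(real \<Rightarrow> real) \<Rightarrow> ereal" where
  "Lbar1 f = Lim at_top (\<lambda>\<theta>::real. Limsup at_top (\<lambda>x::real.
      ereal ((1 / ln \<theta>) * (\<integral>t. f t / t \<partial>lebesgue_on {x..\<theta> * x}))))"

definition L1_means :: "((real \<Rightarrow> real) \<Rightarrow> real) set" where
  "L1_means = {\<psi>. is_mean \<psi> \<and> (\<forall>f\<in>Linf. ereal (\<psi> f) \<le> Lbar1 f)}"

definition Uop :: "(real \<Rightarrow> real) \<Rightarrow> real \<Rightarrow> real" where
  "Uop f = (\<lambda>x. (1 / x) * (\<integral>t. f t \<partial>lebesgue_on {1..x}))"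

end

(*
  If psi is dominated by Lbar1, it kills g - U g: for bounded g the logarithmic window
  integrals of (g - U g)(t)/t telescope to (U g)(theta x) - (U g)(x), which is bounded, so
  Lbar1 vanishes on g - U g and on its negative.

  Conversely, let psi be U-invariant. For bounded continuous Phi, the logarithmic average
  x |-> (1 / ln theta) * integral over [x, theta x] of Phi(t)/t dt differs from Phi by G - U G
  plus a multiple of 1/x, so psi does not see the averaging. With Phi = U g this gives
  psi g = psi (U g) <= (limsup of the windows of g + 2 C) / ln theta, and the window limsups
  are subadditive in ln theta; by Fekete's lemma their quotient by ln theta converges, and its
  limit is Lbar1 g.
*)
theory Submission
  imports Defs
begin

section \<open>Essentially bounded functions and means\<close>

lemma AE_Rplus_I: "(\<And>x. 1 \<le> x \<Longrightarrow> P x) \<Longrightarrow> AE x in Rplus. P x"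
  by (rule AE_I2) (auto simp: space_restrict_space)

lemma AE_Rplus_iff: "(AE x in Rplus. P x) \<longleftrightarrow> (AE x in lebesgue. x \<in> {1..} \<longrightarrow> P x)"
  by (rule AE_restrict_space_iff) auto

lemma AE_lebesgue_on_Icc_if_AE_Rplus:
  assumes "AE x in Rplus. P x" "1 \<le> a"
  shows "AE x in lebesgue_on {a..b}. P x"
proof -
  have "AE x in lebesgue. x \<in> {a..b} \<longrightarrow> P x"
    using assms(1) unfolding AE_Rplus_iff by eventually_elim (use assms(2) in auto)
  then show ?thesis by (subst AE_restrict_space_iff) auto
qed

lemma borel_measurable_lebesgue_onI:
  "h \<in> borel_measurable borel \<Longrightarrow> h \<in> borel_measurable (lebesgue_on S)"
  by (rule measurable_restrict_space1) (simp add: measurable_completion)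

lemma Linf_add: "f \<in> Linf \<Longrightarrow> g \<in> Linf \<Longrightarrow> (\<lambda>x. f x + g x) \<in> Linf"
proof -
  assume f: "f \<in> Linf" and g: "g \<in> Linf"
  then obtain C D where "AE x in Rplus. \<bar>f x\<bar> \<le> C" and "AE x in Rplus. \<bar>g x\<bar> \<le> D"
    by (auto simp: Linf_def)
  then have "AE x in Rplus. \<bar>f x + g x\<bar> \<le> C + D" by eventually_elim auto
  then show ?thesis using f g by (auto simp: Linf_def)
qed

lemma Linf_cmult: "f \<in> Linf \<Longrightarrow> (\<lambda>x. c * f x) \<in> Linf"
proof -
  assume f: "f \<in> Linf"
  then obtain C where "AE x in Rplus. \<bar>f x\<bar> \<le> C" by (auto simp: Linf_def)
  then have "AE x in Rplus. \<bar>c * f x\<bar> \<le> \<bar>c\<bar> * C"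
    by eventually_elim (auto simp: abs_mult mult_left_mono)
  then show ?thesis using f by (auto simp: Linf_def)
qed

lemma Linf_diff: "f \<in> Linf \<Longrightarrow> g \<in> Linf \<Longrightarrow> (\<lambda>x. f x - g x) \<in> Linf"
  using Linf_add[of f "\<lambda>x. (-1) * g x"] Linf_cmult[of g "-1"] by simp

lemma Linf_cong: "f \<in> Linf \<Longrightarrow> (\<And>x. 1 \<le> x \<Longrightarrow> f x = g x) \<Longrightarrow> g \<in> Linf"
proof -
  assume f: "f \<in> Linf" and eq: "\<And>x. 1 \<le> x \<Longrightarrow> f x = g x"
  then obtain B where m: "f \<in> borel_measurable Rplus" and B: "AE x in Rplus. \<bar>f x\<bar> \<le> B"
    by (auto simp: Linf_def)
  have "AE x in Rplus. f x = g x" using eq by (rule AE_Rplus_I)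
  with B have "AE x in Rplus. \<bar>g x\<bar> \<le> B" by eventually_elim auto
  moreover have "g \<in> borel_measurable Rplus"
    using m by (subst measurable_cong[where g=f]) (auto simp: space_restrict_space eq)
  ultimately show ?thesis by (auto simp: Linf_def)
qed

lemma Linf_continuous_boundedI:
  assumes "continuous_on {1..} f" "\<And>x. 1 \<le> x \<Longrightarrow> \<bar>f x\<bar> \<le> C"
  shows "f \<in> Linf"
  unfolding Linf_def using assms
  by (auto intro!: continuous_imp_measurable_on_sets_lebesgue AE_Rplus_I)

lemma Linf_borel_boundedI:
  "f \<in> borel_measurable borel \<Longrightarrow> (\<And>x. \<bar>f x\<bar> \<le> C) \<Longrightarrow> f \<in> Linf"
  unfolding Linf_def by (auto intro!: borel_measurable_lebesgue_onI AE_Rplus_I)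

lemma Linf_const: "(\<lambda>_. c) \<in> Linf"
  by (rule Linf_continuous_boundedI[where C="\<bar>c\<bar>"]) auto

lemma Linf_inverse: "(\<lambda>x. 1 / x) \<in> Linf"
  by (rule Linf_continuous_boundedI[where C=1]) (auto intro!: continuous_intros)

lemma Linf_obtain_bounded_borel:
  assumes "f \<in> Linf"
  obtains g C where "g \<in> borel_measurable borel" "\<And>x. \<bar>g x\<bar> \<le> C" "AE x in Rplus. f x = g x"
proof -
  from assms obtain C where f: "f \<in> borel_measurable Rplus" and C: "AE x in Rplus. \<bar>f x\<bar> \<le> C"
    by (auto simp: Linf_def)
  define f0 where "f0 x = (if x \<in> {1::real..} then f x else 0)" for x
  have "f0 \<in> borel_measurable lebesgue"
    unfolding f0_def by (rule borel_measurable_if_I[OF f]) auto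
  then have "f0 \<in> borel_measurable (completion lborel)" by simp
  then obtain g' where g': "g' \<in> borel_measurable lborel" "AE x in lborel. f0 x = g' x"
    using completion_ex_borel_measurable_real by blast
  define g where "g x = max (- C) (min C (g' x))" for x
  have "AE x in lebesgue. f0 x = g' x" using g'(2) by (simp add: AE_completion)
  with C have "AE x in Rplus. f x = g x"
    unfolding AE_Rplus_iff by eventually_elim (auto simp: f0_def g_def)
  moreover have "g \<in> borel_measurable borel" using g'(1) unfolding g_def by simp
  moreover have "\<bar>g x\<bar> \<le> \<bar>C\<bar>" for x unfolding g_def by (auto simp: abs_le_iff max_def min_def)
  ultimately show ?thesis using that by blast
qed

locale mean =
  fixes \<psi> :: "(real \<Rightarrow> real) \<Rightarrow> real"
  assumes is_mean: "is_mean \<psi>"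
begin

lemma add: "f \<in> Linf \<Longrightarrow> g \<in> Linf \<Longrightarrow> \<psi> (\<lambda>x. f x + g x) = \<psi> f + \<psi> g"
  using is_mean by (auto simp: is_mean_def)

lemma cmult: "f \<in> Linf \<Longrightarrow> \<psi> (\<lambda>x. c * f x) = c * \<psi> f"
  using is_mean by (auto simp: is_mean_def)

lemma nonneg: "f \<in> Linf \<Longrightarrow> (AE x in Rplus. 0 \<le> f x) \<Longrightarrow> 0 \<le> \<psi> f"
  using is_mean by (auto simp: is_mean_def)

lemma diff: "f \<in> Linf \<Longrightarrow> g \<in> Linf \<Longrightarrow> \<psi> (\<lambda>x. f x - g x) = \<psi> f - \<psi> g"
  using add[of f "\<lambda>x. (-1) * g x"] cmult[of g "-1"] Linf_cmult[of g "-1"] by simp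

lemma const: "\<psi> (\<lambda>_. c) = c"
  using cmult[of "\<lambda>_. 1" c] Linf_const is_mean by (simp add: is_mean_def)

lemma mono_AE: "f \<in> Linf \<Longrightarrow> g \<in> Linf \<Longrightarrow> (AE x in Rplus. f x \<le> g x) \<Longrightarrow> \<psi> f \<le> \<psi> g"
  using nonneg[of "\<lambda>x. g x - f x"] diff[of g f] Linf_diff[of g f] by auto

lemma mono: "f \<in> Linf \<Longrightarrow> g \<in> Linf \<Longrightarrow> (\<And>x. 1 \<le> x \<Longrightarrow> f x \<le> g x) \<Longrightarrow> \<psi> f \<le> \<psi> g"
  by (rule mono_AE) (auto intro: AE_Rplus_I)

lemma cong_AE: "f \<in> Linf \<Longrightarrow> g \<in> Linf \<Longrightarrow> (AE x in Rplus. f x = g x) \<Longrightarrow> \<psi> f = \<psi> g"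
  by (rule antisym; rule mono_AE) (auto elim: AE_mp)

lemma cong: "f \<in> Linf \<Longrightarrow> (\<And>x. 1 \<le> x \<Longrightarrow> f x = g x) \<Longrightarrow> \<psi> f = \<psi> g"
  by (rule cong_AE) (auto intro: AE_Rplus_I Linf_cong)

end

lemma sets_lebesgue_Icc: "{a..b::real} \<in> sets lebesgue"
  using lmeasurable_interval(1) by (rule fmeasurableD)

lemma integrable_lebesgue_on_bounded_borel:
  fixes h :: "real \<Rightarrow> real"
  assumes "h \<in> borel_measurable borel" "\<And>x. x \<in> {a..b} \<Longrightarrow> \<bar>h x\<bar> \<le> B"
  shows "integrable (lebesgue_on {a..b}) h"
proof (rule measurable_bounded_by_integrable_imp_lebesgue_integrable[where g="\<lambda>_. B"])
  show "h \<in> borel_measurable (lebesgue_on {a..b})" by (rule borel_measurable_lebesgue_onI[OF assms(1)])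
  show "integrable (lebesgue_on {a..b}) (\<lambda>_. B)"
    by (rule continuous_imp_integrable_real) (rule continuous_on_const)
qed (use assms(2) in auto)

lemma integrable_on_bounded_borel:
  fixes h :: "real \<Rightarrow> real"
  assumes "h \<in> borel_measurable borel" "\<And>x. x \<in> {a..b} \<Longrightarrow> \<bar>h x\<bar> \<le> B"
  shows "h integrable_on {a..b}"
  by (rule integrable_on_lebesgue_on[OF integrable_lebesgue_on_bounded_borel[OF assms] sets_lebesgue_Icc])

lemma lebesgue_integral_eq_integral_bounded_borel:
  fixes h :: "real \<Rightarrow> real"
  assumes "h \<in> borel_measurable borel" "\<And>x. x \<in> {a..b} \<Longrightarrow> \<bar>h x\<bar> \<le> B"
  shows "integral\<^sup>L (lebesgue_on {a..b}) h = integral {a..b} h"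
  by (rule lebesgue_integral_eq_integral[OF integrable_lebesgue_on_bounded_borel[OF assms] sets_lebesgue_Icc])

lemma lborel_integral_indicator_bounded_borel:
  fixes h :: "real \<Rightarrow> real"
  assumes hm: "h \<in> borel_measurable borel" and hb: "\<And>x. x \<in> {a..b} \<Longrightarrow> \<bar>h x\<bar> \<le> B"
  shows "(\<integral>t. indicator {a..b} t * h t \<partial>lborel) = integral {a..b} h"
proof -
  have "integrable lborel (\<lambda>t. indicator {a..b} t * h t)"
  proof (rule Bochner_Integration.integrable_bound)
    show "integrable lborel (\<lambda>t. \<bar>B\<bar> * indicator {a..b} t :: real)"
      by (intro integrable_mult_right integrable_real_indicator) (auto simp: emeasure_lborel_Icc_eq)
    show "AE x in lborel. norm (indicator {a..b} x * h x) \<le> norm (\<bar>B\<bar> * indicator {a..b} x :: real)"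
      using hb by (intro AE_I2) (force simp: indicator_def)
  qed (use hm in simp)
  then have "set_integrable lborel {a..b} h" by (simp add: set_integrable_def)
  from set_borel_integral_eq_integral(2)[OF this] show ?thesis
    by (simp add: set_lebesgue_integral_def)
qed

lemma abs_integral_le:
  fixes h :: "real \<Rightarrow> real"
  assumes "h integrable_on {a..b}" "\<And>x. x \<in> {a..b} \<Longrightarrow> \<bar>h x\<bar> \<le> B" "0 \<le> B" "a \<le> b"
  shows "\<bar>integral {a..b} h\<bar> \<le> B * (b - a)"
  using has_integral_bound[of B h "integral {a..b} h" a b] assms by (auto simp: has_integral_integral)

lemma integral_inverse_square:
  fixes a b :: real
  assumes "0 < a" "a \<le> b"
  shows "(\<integral>t. indicator {a..b} t / t\<^sup>2 \<partial>lborel) = 1 / a - 1 / b"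
proof -
  have "(\<integral>t. (1 / t\<^sup>2) * indicator {a..b} t \<partial>lborel) = (- 1 / b) - (- 1 / a)"
  proof (rule integral_FTC_Icc_real[where F="\<lambda>t. - 1 / t"])
    fix t assume "a \<le> t" "t \<le> b"
    then have "t \<noteq> 0" using assms by auto
    then show "DERIV (\<lambda>t. - 1 / t) t :> 1 / t\<^sup>2" "isCont (\<lambda>t. 1 / t\<^sup>2) t"
      by (auto intro!: derivative_eq_intros continuous_intros simp: power2_eq_square field_simps)
  qed (use assms in simp)
  then show ?thesis by simp
qed

section \<open>The Cesaro operator on bounded Borel functions\<close>

locale bounded_borel =
  fixes g :: "real \<Rightarrow> real" and C :: real
  assumes borel_measurable [measurable]: "g \<in> borel_measurable borel"
    and bounded: "\<And>x. \<bar>g x\<bar> \<le> C"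
begin

lemma bound_nonneg: "0 \<le> C"
  using bounded[of 0] by linarith

lemma in_Linf: "g \<in> Linf"
  by (rule Linf_borel_boundedI[OF borel_measurable bounded])

lemma integrable_on_Icc: "g integrable_on {a..b}"
  by (rule integrable_on_bounded_borel[where B=C]) (auto simp: bounded)

lemma abs_divide_le: "0 < a \<Longrightarrow> a \<le> t \<Longrightarrow> \<bar>g t / t\<bar> \<le> C / a"
  unfolding abs_divide by (rule frac_le) (use bound_nonneg bounded in auto)

lemma integrable_on_Icc_divide: "0 < a \<Longrightarrow> (\<lambda>t. g t / t) integrable_on {a..b}"
  by (rule integrable_on_bounded_borel[where B="C / a"]) (measurable, rule abs_divide_le, auto)

lemma lebesgue_integral_divide_eq_integral:
  "0 < x \<Longrightarrow> integral\<^sup>L (lebesgue_on {x..y}) (\<lambda>t. g t / t) = integral {x..y} (\<lambda>t. g t / t)"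
  by (rule lebesgue_integral_eq_integral_bounded_borel[where B="C / x"])
     (measurable, rule abs_divide_le, auto)

definition prim :: "real \<Rightarrow> real" where
  "prim x = integral {1..x} g"

lemma prim_eq_0: "x \<le> 1 \<Longrightarrow> prim x = 0"
  unfolding prim_def by (cases "x = 1") auto

lemma prim_diff: "1 \<le> x \<Longrightarrow> x \<le> y \<Longrightarrow> prim y - prim x = integral {x..y} g"
  using Henstock_Kurzweil_Integration.integral_combine[OF _ _ integrable_on_Icc, of 1 x y]
  unfolding prim_def by simp

lemma abs_prim_diff_le:
  assumes "x \<le> y"
  shows "\<bar>prim y - prim x\<bar> \<le> C * (y - x)"
proof -
  have "prim z = prim (max 1 z)" for z by (simp add: prim_eq_0 max_def)
  then have "\<bar>prim y - prim x\<bar> = \<bar>integral {max 1 x..max 1 y} g\<bar>"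
    using prim_diff[of "max 1 x" "max 1 y"] assms by auto
  also have "\<dots> \<le> C * (max 1 y - max 1 x)"
    by (rule abs_integral_le) (use integrable_on_Icc bounded bound_nonneg assms in auto)
  also have "\<dots> \<le> C * (y - x)"
    using bound_nonneg assms by (intro mult_left_mono) auto
  finally show ?thesis .
qed

lemma lipschitz_prim: "C-lipschitz_on UNIV prim"
proof (rule lipschitz_onI)
  show "dist (prim x) (prim y) \<le> C * dist x y" for x y
    using abs_prim_diff_le[of x y] abs_prim_diff_le[of y x]
    by (cases "x \<le> y") (auto simp: dist_real_def abs_minus_commute)
qed (rule bound_nonneg)

lemma continuous_prim: "continuous_on UNIV prim"
  by (rule lipschitz_on_continuous_on[OF lipschitz_prim])

lemma borel_measurable_prim [measurable]: "prim \<in> borel_measurable borel"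
  by (rule borel_measurable_continuous_onI[OF continuous_prim])

lemma abs_prim_le: "1 \<le> x \<Longrightarrow> \<bar>prim x\<bar> \<le> C * x"
  using abs_prim_diff_le[of 1 x] prim_eq_0[of 1] mult_left_mono[of "x - 1" x C] bound_nonneg
  by simp

lemma Uop_eq: "Uop g = (\<lambda>x. prim x / x)"
  unfolding Uop_def prim_def
  by (intro ext, subst lebesgue_integral_eq_integral_bounded_borel[where B=C]) (auto simp: bounded)

lemma abs_Uop_le: "\<bar>Uop g x\<bar> \<le> C"
proof (cases "x \<le> 1")
  case True
  then show ?thesis using prim_eq_0 bound_nonneg by (simp add: Uop_eq)
next
  case False
  then show ?thesis
    using abs_prim_le[of x] by (simp add: Uop_eq abs_divide divide_le_eq)
qed

lemma continuous_on_Uop: "continuous_on {0<..} (Uop g)"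
  unfolding Uop_eq by (intro continuous_intros continuous_on_subset[OF continuous_prim]) auto

lemma borel_measurable_Uop [measurable]: "Uop g \<in> borel_measurable borel"
  unfolding Uop_eq by measurable

lemma Uop_in_Linf: "Uop g \<in> Linf"
  by (rule Linf_borel_boundedI[OF borel_measurable_Uop abs_Uop_le])

lemma bounded_borel_Uop: "bounded_borel (Uop g) C"
  by unfold_locales (rule borel_measurable_Uop, rule abs_Uop_le)

lemma bounded_borel_diff_Uop: "bounded_borel (\<lambda>x. g x - Uop g x) (2 * C)"
proof
  show "\<bar>g x - Uop g x\<bar> \<le> 2 * C" for x
    using bounded[of x] abs_Uop_le[of x] by linarith
qed measurable

definition triangle_kernel :: "real \<Rightarrow> real \<Rightarrow> real \<Rightarrow> real \<Rightarrow> real" where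
  "triangle_kernel x y s t = (if x \<le> t \<and> t \<le> y \<and> 1 \<le> s \<and> s \<le> t then g s / t\<^sup>2 else 0)"

lemma borel_measurable_triangle_kernel [measurable]:
  "(\<lambda>(s, t). triangle_kernel x y s t) \<in> borel_measurable (lborel \<Otimes>\<^sub>M lborel)"
  unfolding triangle_kernel_def by measurable

lemma integrable_triangle_kernel:
  assumes "1 \<le> x"
  shows "integrable (lborel \<Otimes>\<^sub>M lborel) (\<lambda>(s, t). triangle_kernel x y s t)"
proof (rule Bochner_Integration.integrable_bound)
  show "integrable (lborel \<Otimes>\<^sub>M lborel) (\<lambda>p. C * indicator ({1..y} \<times> {x..y}) p :: real)"
    by (intro integrable_mult_right integrable_real_indicator)
       (auto simp: lborel.emeasure_pair_measure_Times ennreal_mult_less_top emeasure_lborel_Icc_eq)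
  have "norm (triangle_kernel x y s t) \<le> norm (C * indicator ({1..y} \<times> {x..y}) (s, t) :: real)" for s t
  proof (cases "x \<le> t \<and> t \<le> y \<and> 1 \<le> s \<and> s \<le> t")
    case True
    then have "1 \<le> t\<^sup>2" using assms by (simp add: one_le_power)
    then have "\<bar>g s\<bar> / t\<^sup>2 \<le> C / 1"
      by (rule frac_le[OF bound_nonneg bounded zero_less_one])
    then show ?thesis using True bound_nonneg by (simp add: triangle_kernel_def indicator_def abs_divide)
  qed (use bound_nonneg in \<open>auto simp: triangle_kernel_def indicator_def\<close>)
  then show "AE p in lborel \<Otimes>\<^sub>M lborel.
      norm ((\<lambda>(s, t). triangle_kernel x y s t) p) \<le> norm (C * indicator ({1..y} \<times> {x..y}) p :: real)"
    by (intro AE_I2) auto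
qed simp

lemma integral_triangle_kernel_fst:
  "(\<integral>s. triangle_kernel x y s t \<partial>lborel) = indicator {x..y} t * (prim t / t\<^sup>2)"
proof -
  have "(\<integral>s. triangle_kernel x y s t \<partial>lborel)
      = (\<integral>s. (indicator {x..y} t / t\<^sup>2) * (indicator {1..t} s * g s) \<partial>lborel)"
    by (rule Bochner_Integration.integral_cong) (auto simp: triangle_kernel_def indicator_def)
  also have "\<dots> = (indicator {x..y} t / t\<^sup>2) * (\<integral>s. indicator {1..t} s * g s \<partial>lborel)"
    by (rule integral_mult_right_zero)
  also have "(\<integral>s. indicator {1..t} s * g s \<partial>lborel) = prim t"
    unfolding prim_def by (rule lborel_integral_indicator_bounded_borel[where B=C]) (auto simp: bounded)
  finally show ?thesis by simp
qed

lemma integral_triangle_kernel_snd: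
  assumes xy: "1 \<le> x" "x \<le> y"
  shows "(\<integral>t. triangle_kernel x y s t \<partial>lborel) = indicator {1..y} s * (g s * (1 / max x s - 1 / y))"
proof (cases "s \<in> {1..y}")
  case True
  have "(\<integral>t. triangle_kernel x y s t \<partial>lborel) = (\<integral>t. g s * (indicator {max x s..y} t / t\<^sup>2) \<partial>lborel)"
    by (rule Bochner_Integration.integral_cong) (use True xy in \<open>auto simp: triangle_kernel_def indicator_def\<close>)
  also have "\<dots> = g s * (\<integral>t. indicator {max x s..y} t / t\<^sup>2 \<partial>lborel)"
    by (rule integral_mult_right_zero)
  also have "(\<integral>t. indicator {max x s..y} t / t\<^sup>2 \<partial>lborel) = 1 / max x s - 1 / y"
    by (rule integral_inverse_square) (use True xy in auto)
  finally show ?thesis using True by simp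
next
  case False
  then have "triangle_kernel x y s = (\<lambda>t. 0)" by (auto simp: triangle_kernel_def)
  then show ?thesis using False by simp
qed

lemma integral_prim_divide_square:
  assumes xy: "1 \<le> x" "x \<le> y"
  shows "integral {x..y} (\<lambda>t. prim t / t\<^sup>2) = integral {1..y} (\<lambda>s. g s * (1 / max x s - 1 / y))"
proof -
  have "integral {x..y} (\<lambda>t. prim t / t\<^sup>2) = (\<integral>t. (\<integral>s. triangle_kernel x y s t \<partial>lborel) \<partial>lborel)"
    unfolding integral_triangle_kernel_fst
  proof (rule lborel_integral_indicator_bounded_borel[symmetric, where B=C])
    fix t assume t: "t \<in> {x..y}"
    then have t1: "1 \<le> t" using xy by auto
    have "\<bar>prim t\<bar> \<le> C * t\<^sup>2"
      using abs_prim_le[OF t1] mult_left_mono[of t "t\<^sup>2" C] t1 bound_nonneg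
      by (simp add: power2_eq_square)
    then show "\<bar>prim t / t\<^sup>2\<bar> \<le> C" using t1 by (simp add: abs_divide divide_le_eq)
  qed measurable
  also have "\<dots> = (\<integral>s. (\<integral>t. triangle_kernel x y s t \<partial>lborel) \<partial>lborel)"
    by (rule lborel_pair.Fubini_integral[OF integrable_triangle_kernel[OF xy(1)]])
  also have "\<dots> = integral {1..y} (\<lambda>s. g s * (1 / max x s - 1 / y))"
    unfolding integral_triangle_kernel_snd[OF xy]
  proof (rule lborel_integral_indicator_bounded_borel[where B=C])
    fix s assume s: "s \<in> {1..y}"
    have m: "1 \<le> max x s" "max x s \<le> y" using s xy by auto
    have "1 / y \<le> 1 / max x s" by (rule frac_le) (use m in auto)
    moreover have "1 / max x s \<le> 1" "0 < 1 / y" using m by auto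
    ultimately have "\<bar>1 / max x s - 1 / y\<bar> \<le> 1" by linarith
    then have "\<bar>g s\<bar> * \<bar>1 / max x s - 1 / y\<bar> \<le> C * 1"
      by (intro mult_mono bounded bound_nonneg) auto
    then show "\<bar>g s * (1 / max x s - 1 / y)\<bar> \<le> C" by (simp add: abs_mult)
  qed measurable
  finally show ?thesis .
qed

lemma integral_Uop_divide:
  assumes xy: "1 \<le> x" "x \<le> y"
  shows "integral {x..y} (\<lambda>t. Uop g t / t) = integral {x..y} (\<lambda>t. g t / t) - (Uop g y - Uop g x)"
proof -
  define h where "h s = g s * (1 / max x s - 1 / y)" for s
  have "h integrable_on {1..y}"
  proof (rule integrable_on_bounded_borel[where B="C * (1 / x + 1 / y)"])
    fix s :: real
    have "1 / max x s \<le> 1 / x" by (rule frac_le) (use xy in auto)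
    moreover have "0 \<le> 1 / max x s" "0 \<le> 1 / y" using xy by auto
    ultimately have "\<bar>1 / max x s - 1 / y\<bar> \<le> 1 / x + 1 / y" by linarith
    then have "\<bar>g s\<bar> * \<bar>1 / max x s - 1 / y\<bar> \<le> C * (1 / x + 1 / y)"
      by (intro mult_mono bounded bound_nonneg) auto
    then show "\<bar>h s\<bar> \<le> C * (1 / x + 1 / y)" by (simp add: h_def abs_mult)
  qed (unfold h_def, measurable)
  have left: "integral {1..x} h = prim x * (1 / x - 1 / y)"
    unfolding prim_def by (subst integral_cong[where g="\<lambda>s. g s * (1 / x - 1 / y)"]) (auto simp: h_def)
  have right: "integral {x..y} h = integral {x..y} (\<lambda>s. g s / s) - (prim y - prim x) / y"
  proof -
    have "integral {x..y} h = integral {x..y} (\<lambda>s. g s / s - g s / y)"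
      by (rule integral_cong) (auto simp: h_def algebra_simps)
    also have "\<dots> = integral {x..y} (\<lambda>s. g s / s) - integral {x..y} g / y"
      using integrable_on_Icc_divide[of x y] integrable_on_Icc xy by (subst integral_diff) auto
    finally show ?thesis using prim_diff[OF xy] by simp
  qed
  have "integral {x..y} (\<lambda>t. Uop g t / t) = integral {1..y} h"
    unfolding h_def integral_prim_divide_square[OF xy, symmetric] Uop_eq
    by (rule integral_cong) (simp add: power2_eq_square)
  also have "\<dots> = integral {1..x} h + integral {x..y} h"
    using Henstock_Kurzweil_Integration.integral_combine[OF xy \<open>h integrable_on {1..y}\<close>] by simp
  also have "\<dots> = integral {x..y} (\<lambda>t. g t / t) - (Uop g y - Uop g x)"
    unfolding left right using xy by (simp add: Uop_eq field_simps)
  finally show ?thesis .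
qed

lemma lebesgue_integral_diff_Uop_divide:
  assumes xy: "1 \<le> x" "x \<le> y"
  shows "integral\<^sup>L (lebesgue_on {x..y}) (\<lambda>t. (g t - Uop g t) / t) = Uop g y - Uop g x"
proof -
  have "integral\<^sup>L (lebesgue_on {x..y}) (\<lambda>t. (g t - Uop g t) / t) = integral {x..y} (\<lambda>t. g t / t - Uop g t / t)"
    using bounded_borel.lebesgue_integral_divide_eq_integral[OF bounded_borel_diff_Uop, of x y] xy
    by (simp add: diff_divide_distrib)
  also have "\<dots> = integral {x..y} (\<lambda>t. g t / t) - integral {x..y} (\<lambda>t. Uop g t / t)"
    using integrable_on_Icc_divide bounded_borel.integrable_on_Icc_divide[OF bounded_borel_Uop] xy
    by (intro integral_diff) auto
  finally show ?thesis using integral_Uop_divide[OF xy] by simp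
qed

end

section \<open>Logarithmic windows and the upper functional\<close>

lemma Lbar1_eq_0_if_windows_bounded:
  assumes "\<And>\<theta> x. 1 < \<theta> \<Longrightarrow> 1 \<le> x \<Longrightarrow> \<bar>integral\<^sup>L (lebesgue_on {x..\<theta> * x}) (\<lambda>t. h t / t)\<bar> \<le> B"
  shows "Lbar1 h = 0"
  unfolding Lbar1_def
proof (rule tendsto_Lim)
  define q where "q \<theta> x = 1 / ln \<theta> * integral\<^sup>L (lebesgue_on {x..\<theta> * x}) (\<lambda>t. h t / t)" for \<theta> x
  have q_bound: "- (B / ln \<theta>) \<le> q \<theta> x \<and> q \<theta> x \<le> B / ln \<theta>" if "1 < \<theta>" "1 \<le> x" for \<theta> x
    using assms[OF that] that by (simp add: q_def abs_le_iff divide_right_mono mult.commute[of "1 / _"]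
        flip: divide_minus_left divide_inverse)
  have lim: "((\<lambda>\<theta>. ereal (c / ln \<theta>)) \<longlongrightarrow> 0) at_top" for c :: real
    using tendsto_ereal[OF tendsto_divide_0[OF tendsto_const filterlim_at_top_imp_at_infinity[OF ln_at_top]]]
    by (simp add: zero_ereal_def)
  have upper: "\<forall>\<^sub>F \<theta> in at_top. Limsup at_top (\<lambda>x. ereal (q \<theta> x)) \<le> ereal (B / ln \<theta>)"
    using eventually_gt_at_top[of 1]
  proof eventually_elim
    case (elim \<theta>)
    show ?case
      by (rule Limsup_bounded, use eventually_ge_at_top[of 1] in eventually_elim) (use q_bound elim in auto)
  qed
  have lower: "\<forall>\<^sub>F \<theta> in at_top. ereal (- B / ln \<theta>) \<le> Limsup at_top (\<lambda>x. ereal (q \<theta> x))"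
    using eventually_gt_at_top[of 1]
  proof eventually_elim
    case (elim \<theta>)
    show ?case
      by (rule le_Limsup, simp, use eventually_ge_at_top[of 1] in eventually_elim) (use q_bound elim in auto)
  qed
  show "((\<lambda>\<theta>. Limsup at_top (\<lambda>x. ereal (q \<theta> x))) \<longlongrightarrow> 0) at_top"
    by (rule tendsto_sandwich[OF lower upper lim lim])
qed simp

lemma subadditive_iterate_le:
  fixes \<phi> :: "real \<Rightarrow> real"
  assumes sub: "\<And>a b. 0 \<le> a \<Longrightarrow> 0 \<le> b \<Longrightarrow> \<phi> (a + b) \<le> \<phi> a + \<phi> b"
    and "0 \<le> a" "0 \<le> r"
  shows "\<phi> (real n * a + r) \<le> real n * \<phi> a + \<phi> r"
proof (induction n)
  case (Suc n)
  have "\<phi> (real (Suc n) * a + r) = \<phi> (a + (real n * a + r))" by (simp add: algebra_simps)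
  also have "\<dots> \<le> \<phi> a + \<phi> (real n * a + r)" by (rule sub) (use assms in auto)
  also have "\<dots> \<le> \<phi> a + (real n * \<phi> a + \<phi> r)" using Suc by simp
  finally show ?case by (simp add: algebra_simps)
qed simp

lemma subadditive_divide_le:
  fixes \<phi> :: "real \<Rightarrow> real"
  assumes sub: "\<And>a b. 0 \<le> a \<Longrightarrow> 0 \<le> b \<Longrightarrow> \<phi> (a + b) \<le> \<phi> a + \<phi> b"
    and bnd: "\<And>a. 0 \<le> a \<Longrightarrow> \<bar>\<phi> a\<bar> \<le> K * a"
    and a: "0 < a" and ua: "a \<le> u"
  shows "\<phi> u / u \<le> \<phi> a / a + (\<bar>\<phi> a\<bar> + K * a) / u"
proof -
  define n where "n = nat \<lfloor>u / a\<rfloor>"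
  have n: "real n \<le> u / a" "u / a < real n + 1" using a ua by (auto simp: n_def)
  define r where "r = u - real n * a"
  have r: "0 \<le> r" "r < a" using n a by (auto simp: r_def field_simps)
  have "\<phi> u \<le> real n * \<phi> a + \<phi> r"
    using subadditive_iterate_le[OF sub, of a r n] a r by (simp add: r_def)
  moreover have "\<phi> r \<le> K * a"
  proof -
    have "0 \<le> K * a" using bnd[of a] a abs_ge_zero[of "\<phi> a"] by linarith
    then have "0 \<le> K" using a by (simp add: zero_le_mult_iff)
    then show ?thesis using bnd[of r] r mult_left_mono[of r a K] by (simp add: abs_le_iff)
  qed
  moreover have "real n * \<phi> a \<le> (u / a) * \<phi> a + \<bar>\<phi> a\<bar>"
  proof (cases "0 \<le> \<phi> a")
    case True
    then show ?thesis using n mult_right_mono[of "real n" "u / a" "\<phi> a"] by simp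
  next
    case False
    then show ?thesis using n mult_right_mono_neg[of "u / a - 1" "real n" "\<phi> a"]
      by (simp add: algebra_simps)
  qed
  ultimately have "\<phi> u \<le> u * (\<phi> a / a) + (\<bar>\<phi> a\<bar> + K * a)" by simp
  then show ?thesis using a ua by (simp add: field_simps)
qed

lemma subadditive_divide_tendsto:
  fixes \<phi> :: "real \<Rightarrow> real"
  assumes sub: "\<And>a b. 0 \<le> a \<Longrightarrow> 0 \<le> b \<Longrightarrow> \<phi> (a + b) \<le> \<phi> a + \<phi> b"
    and bnd: "\<And>a. 0 \<le> a \<Longrightarrow> \<bar>\<phi> a\<bar> \<le> K * a"
  shows "\<exists>m. ((\<lambda>u. \<phi> u / u) \<longlongrightarrow> m) at_top"
proof
  define S where "S = (\<lambda>a. \<phi> a / a) ` {0<..}"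
  have "bdd_below S"
  proof (rule bdd_belowI)
    fix y assume "y \<in> S"
    then obtain a where a: "0 < a" "y = \<phi> a / a" by (auto simp: S_def)
    then have "- K * a \<le> \<phi> a" using bnd[of a] by (auto simp: abs_le_iff)
    then show "- K \<le> y" using a by (simp add: le_divide_eq)
  qed
  then have lower: "Inf S \<le> \<phi> u / u" if "0 < u" for u
    using that by (intro cInf_lower) (auto simp: S_def)
  show "((\<lambda>u. \<phi> u / u) \<longlongrightarrow> Inf S) at_top"
  proof (rule tendstoI)
    fix e :: real assume e: "0 < e"
    have "S \<noteq> {}" by (auto simp: S_def)
    with \<open>bdd_below S\<close> obtain a where a: "0 < a" "\<phi> a / a < Inf S + e / 2"
      using cInf_less_iff[of S "Inf S + e / 2"] e by (auto simp: S_def)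
    define R where "R = \<bar>\<phi> a\<bar> + K * a"
    have "\<forall>\<^sub>F u in at_top. \<phi> u / u < Inf S + e"
      using eventually_ge_at_top[of a] eventually_gt_at_top[of "2 * R / e"]
    proof eventually_elim
      case (elim u)
      then have "R / u < e / 2" using a e by (simp add: field_simps)
      then show ?case using subadditive_divide_le[OF sub bnd a(1) elim(1)] a(2) unfolding R_def by linarith
    qed
    then show "\<forall>\<^sub>F u in at_top. dist (\<phi> u / u) (Inf S) < e"
      using eventually_gt_at_top[of 0] by eventually_elim (use lower e in \<open>auto simp: dist_real_def\<close>)
  qed
qed

definition window_integral :: "(real \<Rightarrow> real) \<Rightarrow> real \<Rightarrow> real \<Rightarrow> real" where
  "window_integral f \<theta> x = integral {x..\<theta> * x} (\<lambda>t. f t / t)"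

context bounded_borel
begin

lemma abs_window_integral_le:
  assumes x: "1 \<le> x" and \<theta>: "1 \<le> \<theta>"
  shows "\<bar>window_integral g \<theta> x\<bar> \<le> C * ln \<theta>"
proof -
  have "((\<lambda>t. C / t) has_integral (C * ln (\<theta> * x) - C * ln x)) {x..\<theta> * x}"
  proof (rule fundamental_theorem_of_calculus)
    fix t assume "t \<in> {x..\<theta> * x}"
    then have "0 < t" using x by auto
    then show "((\<lambda>t. C * ln t) has_vector_derivative C / t) (at t within {x..\<theta> * x})"
      unfolding has_real_derivative_iff_has_vector_derivative[symmetric]
      by (auto intro!: derivative_eq_intros)
  qed (use x \<theta> in simp)
  moreover have "C * ln (\<theta> * x) - C * ln x = C * ln \<theta>"
    using x \<theta> by (simp add: ln_mult algebra_simps)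
  ultimately have "(\<lambda>t. C / t) integrable_on {x..\<theta> * x}" "integral {x..\<theta> * x} (\<lambda>t. C / t) = C * ln \<theta>"
    by (auto simp: integral_unique)
  moreover have "\<bar>g t / t\<bar> \<le> C / t" if "t \<in> {x..\<theta> * x}" for t
    using abs_divide_le[of t t] that x by auto
  ultimately show ?thesis
    unfolding window_integral_def
    using integral_norm_bound_integral[OF integrable_on_Icc_divide, of x "\<lambda>t. C / t" "\<theta> * x"] x
    by auto
qed

lemma window_integral_mult:
  assumes x: "1 \<le> x" and a: "1 \<le> a" and b: "1 \<le> b"
  shows "window_integral g (a * b) x = window_integral g a x + window_integral g b (a * x)"
proof -
  have "x \<le> a * x" "a * x \<le> a * b * x" using x a b by (auto simp: mult_le_cancel_right1)
  from Henstock_Kurzweil_Integration.integral_combine[OF this integrable_on_Icc_divide]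
  show ?thesis unfolding window_integral_def using x by (simp add: mult_ac)
qed

lemma window_integral_Uop_le:
  assumes "1 \<le> x" "1 \<le> \<theta>"
  shows "window_integral (Uop g) \<theta> x \<le> window_integral g \<theta> x + 2 * C"
proof -
  have "x \<le> \<theta> * x" using assms mult_right_mono[of 1 \<theta> x] by simp
  from integral_Uop_divide[OF assms(1) this] show ?thesis
    using abs_Uop_le[of x] abs_Uop_le[of "\<theta> * x"] by (simp add: window_integral_def)
qed

definition window_limsup :: "real \<Rightarrow> real" where
  "window_limsup \<theta> = real_of_ereal (Limsup at_top (\<lambda>x. ereal (window_integral g \<theta> x)))"

lemma Limsup_window_integral:
  assumes \<theta>: "1 \<le> \<theta>"
  shows "Limsup at_top (\<lambda>x. ereal (window_integral g \<theta> x)) = ereal (window_limsup \<theta>)"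
    and "\<bar>window_limsup \<theta>\<bar> \<le> C * ln \<theta>"
proof -
  have bound: "\<forall>\<^sub>F x in at_top. - (C * ln \<theta>) \<le> window_integral g \<theta> x \<and> window_integral g \<theta> x \<le> C * ln \<theta>"
    using eventually_ge_at_top[of 1]
  proof eventually_elim
    case (elim x)
    from abs_window_integral_le[OF elim \<theta>] show ?case by linarith
  qed
  have upper: "Limsup at_top (\<lambda>x. ereal (window_integral g \<theta> x)) \<le> ereal (C * ln \<theta>)"
    by (rule Limsup_bounded) (use bound in \<open>auto elim: eventually_mono\<close>)
  have lower: "ereal (- (C * ln \<theta>)) \<le> Limsup at_top (\<lambda>x. ereal (window_integral g \<theta> x))"
    by (rule le_Limsup) (use bound in \<open>auto elim: eventually_mono\<close>)
  show eq: "Limsup at_top (\<lambda>x. ereal (window_integral g \<theta> x)) = ereal (window_limsup \<theta>)"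
    unfolding window_limsup_def using upper lower by (intro ereal_real'[symmetric]) auto
  show "\<bar>window_limsup \<theta>\<bar> \<le> C * ln \<theta>"
    using upper lower unfolding eq by (simp add: abs_le_iff)
qed

lemma eventually_window_integral_less:
  assumes "1 \<le> \<theta>" "window_limsup \<theta> < c"
  shows "\<forall>\<^sub>F x in at_top. window_integral g \<theta> x < c"
proof -
  have "Limsup at_top (\<lambda>x. ereal (window_integral g \<theta> x)) < ereal c"
    using assms by (simp add: Limsup_window_integral)
  from Limsup_lessD[OF this] show ?thesis by simp
qed

lemma window_limsup_le:
  assumes "1 \<le> \<theta>" "\<forall>\<^sub>F x in at_top. window_integral g \<theta> x \<le> c"
  shows "window_limsup \<theta> \<le> c"
proof -
  have "Limsup at_top (\<lambda>x. ereal (window_integral g \<theta> x)) \<le> ereal c"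
    by (rule Limsup_bounded) (use assms(2) in \<open>auto elim: eventually_mono\<close>)
  then show ?thesis using Limsup_window_integral(1)[OF assms(1)] by simp
qed

lemma window_limsup_mult_le:
  assumes a: "1 \<le> a" and b: "1 \<le> b"
  shows "window_limsup (a * b) \<le> window_limsup a + window_limsup b"
proof (rule field_le_epsilon)
  fix e :: real assume e: "0 < e"
  have "filterlim (\<lambda>x. a * x) at_top at_top"
    using a by (intro filterlim_tendsto_pos_mult_at_top[OF tendsto_const] filterlim_ident) auto
  then have "\<forall>\<^sub>F x in at_top. window_integral g b (a * x) < window_limsup b + e / 2"
    using eventually_window_integral_less[OF b, of "window_limsup b + e / 2"] e
    by (auto simp: filterlim_iff)
  moreover have "\<forall>\<^sub>F x in at_top. window_integral g a x < window_limsup a + e / 2"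
    using eventually_window_integral_less[OF a] e by simp
  ultimately have "\<forall>\<^sub>F x in at_top. window_integral g (a * b) x \<le> window_limsup a + window_limsup b + e"
    using eventually_ge_at_top[of 1]
  proof eventually_elim
    case (elim x)
    then show ?case using window_integral_mult[OF elim(3) a b] by linarith
  qed
  moreover have "1 \<le> a * b" using a b mult_mono[of 1 a 1 b] by simp
  ultimately show "window_limsup (a * b) \<le> window_limsup a + window_limsup b + e"
    using window_limsup_le by blast
qed

lemma window_limsup_divide_tendsto: "\<exists>m. ((\<lambda>\<theta>. window_limsup \<theta> / ln \<theta>) \<longlongrightarrow> m) at_top"
proof -
  have "\<exists>m. ((\<lambda>u. window_limsup (exp u) / u) \<longlongrightarrow> m) at_top"
  proof (rule subadditive_divide_tendsto)
    show "window_limsup (exp (a + b)) \<le> window_limsup (exp a) + window_limsup (exp b)"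
      if "0 \<le> a" "0 \<le> b" for a b
      using window_limsup_mult_le[of "exp a" "exp b"] that by (simp add: exp_add)
    show "\<bar>window_limsup (exp a)\<bar> \<le> C * a" if "0 \<le> a" for a
      using Limsup_window_integral(2)[of "exp a"] that by simp
  qed
  then obtain m where "((\<lambda>u. window_limsup (exp u) / u) \<longlongrightarrow> m) at_top" by blast
  from filterlim_compose[OF this ln_at_top]
  have lim: "((\<lambda>\<theta>. window_limsup (exp (ln \<theta>)) / ln \<theta>) \<longlongrightarrow> m) at_top" .
  have "\<forall>\<^sub>F \<theta> in at_top. window_limsup (exp (ln \<theta>)) / ln \<theta> = window_limsup \<theta> / ln \<theta>"
    using eventually_gt_at_top[of 0] by eventually_elim simp
  from lim[unfolded tendsto_cong[OF this]] show ?thesis by blast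
qed

lemma Lbar1_eq_window_limsup_limit:
  assumes lim: "((\<lambda>\<theta>. window_limsup \<theta> / ln \<theta>) \<longlongrightarrow> m) at_top"
  shows "Lbar1 g = ereal m"
  unfolding Lbar1_def
proof (rule tendsto_Lim)
  have "\<forall>\<^sub>F \<theta> in at_top. ereal (window_limsup \<theta> / ln \<theta>) =
      Limsup at_top (\<lambda>x. ereal (1 / ln \<theta> * integral\<^sup>L (lebesgue_on {x..\<theta> * x}) (\<lambda>t. g t / t)))"
    using eventually_ge_at_top[of 1]
  proof eventually_elim
    case (elim \<theta>)
    have "\<forall>\<^sub>F x in at_top. ereal (1 / ln \<theta> * integral\<^sup>L (lebesgue_on {x..\<theta> * x}) (\<lambda>t. g t / t)) =
        ereal (1 / ln \<theta>) * ereal (window_integral g \<theta> x)"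
      using eventually_ge_at_top[of 1]
      by eventually_elim (simp add: lebesgue_integral_divide_eq_integral window_integral_def)
    then have "Limsup at_top (\<lambda>x. ereal (1 / ln \<theta> * integral\<^sup>L (lebesgue_on {x..\<theta> * x}) (\<lambda>t. g t / t))) =
        Limsup at_top (\<lambda>x. ereal (1 / ln \<theta>) * ereal (window_integral g \<theta> x))"
      by (rule Limsup_eq)
    also have "\<dots> = ereal (1 / ln \<theta>) * Limsup at_top (\<lambda>x. ereal (window_integral g \<theta> x))"
      by (rule Limsup_ereal_mult_left) (use elim in auto)
    finally show ?case using Limsup_window_integral(1)[OF elim] by simp
  qed
  from tendsto_ereal[OF lim]
  show "((\<lambda>\<theta>. Limsup at_top (\<lambda>x. ereal (1 / ln \<theta> * integral\<^sup>L (lebesgue_on {x..\<theta> * x}) (\<lambda>t. g t / t))))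
      \<longlongrightarrow> ereal m) at_top"
    unfolding tendsto_cong[OF \<open>\<forall>\<^sub>F \<theta> in at_top. _\<close>] .
qed simp

end

section \<open>Logarithmic smoothing\<close>

lemma has_real_derivative_integral_from_half:
  fixes q :: "real \<Rightarrow> real"
  assumes q: "continuous_on {0<..} q" and y: "1 / 2 < y"
  shows "((\<lambda>u. integral {1/2..u} q) has_real_derivative q y) (at y)"
proof -
  have "((\<lambda>u. integral {1/2..u} q) has_real_derivative q y) (at y within {1/2..y+1})"
    by (rule integral_has_real_derivative) (use y in \<open>auto intro: continuous_on_subset[OF q]\<close>)
  moreover have "at y within {1/2..y+1} = at y"
    by (rule at_within_interior) (use y in \<open>auto simp: interior_atLeastAtMost_real\<close>)
  ultimately show ?thesis by simp
qed

lemma has_real_derivative_scaled_window: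
  fixes q :: "real \<Rightarrow> real"
  assumes q: "continuous_on {0<..} q" and c: "1 \<le> c" and x: "1 / 2 < x"
  shows "((\<lambda>u. integral {1/2..c * u} q - integral {1/2..u} q) has_real_derivative q (c * x) * c - q x) (at x)"
proof (rule DERIV_diff)
  have "x \<le> c * x" using x c mult_right_mono[of 1 c x] by simp
  then have "1 / 2 < c * x" using x by linarith
  from DERIV_chain2[OF has_real_derivative_integral_from_half[OF q this] DERIV_cmult_Id[of c x UNIV]]
  show "((\<lambda>u. integral {1/2..c * u} q) has_real_derivative q (c * x) * c) (at x)" by simp
qed (rule has_real_derivative_integral_from_half[OF q x])

locale log_smoothing =
  fixes \<Phi> :: "real \<Rightarrow> real" and C \<theta> :: real
  assumes continuous: "continuous_on {0<..} \<Phi>" and bounded: "\<And>x. \<bar>\<Phi> x\<bar> \<le> C"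
    and \<theta>_gt_1: "1 < \<theta>"
begin

text \<open>Primitives are based at \<open>1/2\<close> so that \<open>D\<close> and \<open>E\<close> are differentiable on an open set
  containing \<open>{1..}\<close>.\<close>

definition prim_div :: "real \<Rightarrow> real" where
  "prim_div y = integral {1/2..y} (\<lambda>t. \<Phi> t / t)"

definition prim_ln_div :: "real \<Rightarrow> real" where
  "prim_ln_div y = integral {1/2..y} (\<lambda>t. ln t * \<Phi> t / t)"

definition D :: "real \<Rightarrow> real" where
  "D x = prim_div (\<theta> * x) - prim_div x"

definition E :: "real \<Rightarrow> real" where
  "E x = prim_ln_div (\<theta> * x) - prim_ln_div x"

text \<open>\<open>H\<close> is a bounded solution of \<open>x H'(x) = D x / ln \<theta> - \<Phi> x\<close>, so that \<open>G = (x H)'\<close>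
  and \<open>U G = H - H 1 / x\<close>.\<close>

definition H :: "real \<Rightarrow> real" where
  "H x = D x - (E x - ln x * D x) / ln \<theta>"

definition G :: "real \<Rightarrow> real" where
  "G x = H x + D x / ln \<theta> - \<Phi> x"

lemma ln_\<theta>_pos: "0 < ln \<theta>"
  using \<theta>_gt_1 by simp

lemma bound_nonneg: "0 \<le> C"
  using bounded[of 0] by linarith

lemma le_\<theta>_mult: "0 \<le> x \<Longrightarrow> x \<le> \<theta> * x"
  using mult_right_mono[of 1 \<theta> x] \<theta>_gt_1 by simp

lemma continuous_on_div: "continuous_on {0<..} (\<lambda>t. \<Phi> t / t)"
  by (intro continuous_intros continuous) auto

lemma continuous_on_ln_div: "continuous_on {0<..} (\<lambda>t. ln t * \<Phi> t / t)"
  by (intro continuous_intros continuous) auto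

lemma has_derivative_D:
  assumes x: "1 / 2 < x"
  shows "(D has_real_derivative (\<Phi> (\<theta> * x) - \<Phi> x) / x) (at x)"
  unfolding D_def[abs_def] prim_div_def
  by (rule DERIV_cong[OF has_real_derivative_scaled_window[OF continuous_on_div _ x]])
     (use \<theta>_gt_1 x in \<open>auto simp: field_simps\<close>)

lemma has_derivative_E:
  assumes x: "1 / 2 < x"
  shows "(E has_real_derivative ((ln \<theta> + ln x) * \<Phi> (\<theta> * x) - ln x * \<Phi> x) / x) (at x)"
  unfolding E_def[abs_def] prim_ln_div_def
  by (rule DERIV_cong[OF has_real_derivative_scaled_window[OF continuous_on_ln_div _ x]])
     (use \<theta>_gt_1 x in \<open>auto simp: field_simps ln_mult\<close>)

lemma has_derivative_mult_H:
  assumes x: "1 / 2 < x"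
  shows "((\<lambda>x. x * H x) has_real_derivative G x) (at x)"
proof -
  have "((\<lambda>x. x * H x) has_real_derivative
      H x + x * ((\<Phi> (\<theta> * x) - \<Phi> x) / x
        - (((ln \<theta> + ln x) * \<Phi> (\<theta> * x) - ln x * \<Phi> x) / x
           - (D x / x + ln x * ((\<Phi> (\<theta> * x) - \<Phi> x) / x))) / ln \<theta>)) (at x)"
    unfolding H_def[abs_def] using x ln_\<theta>_pos
    by (auto intro!: derivative_eq_intros has_derivative_D has_derivative_E)
  moreover have "H x + x * ((\<Phi> (\<theta> * x) - \<Phi> x) / x
        - (((ln \<theta> + ln x) * \<Phi> (\<theta> * x) - ln x * \<Phi> x) / x
           - (D x / x + ln x * ((\<Phi> (\<theta> * x) - \<Phi> x) / x))) / ln \<theta>) = G x"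
    using x ln_\<theta>_pos by (simp add: G_def field_simps)
  ultimately show ?thesis by simp
qed

lemma integrable_on_div: "0 < a \<Longrightarrow> (\<lambda>t. \<Phi> t / t) integrable_on {a..b}"
  by (rule integrable_continuous_interval, rule continuous_on_subset[OF continuous_on_div]) auto

lemma integrable_on_ln_div: "0 < a \<Longrightarrow> (\<lambda>t. ln t * \<Phi> t / t) integrable_on {a..b}"
  by (rule integrable_continuous_interval, rule continuous_on_subset[OF continuous_on_ln_div]) auto

lemma D_eq_window_integral:
  assumes x: "1 / 2 \<le> x"
  shows "D x = window_integral \<Phi> \<theta> x"
  using Henstock_Kurzweil_Integration.integral_combine[OF x le_\<theta>_mult integrable_on_div] x
  unfolding D_def prim_div_def window_integral_def by simp

lemma E_minus_ln_mult_D: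
  assumes x: "1 \<le> x"
  shows "E x - ln x * D x = integral {x..\<theta> * x} (\<lambda>t. (ln t - ln x) * (\<Phi> t / t))"
proof -
  have "E x = integral {x..\<theta> * x} (\<lambda>t. ln t * \<Phi> t / t)"
    using Henstock_Kurzweil_Integration.integral_combine[OF _ le_\<theta>_mult integrable_on_ln_div, of "1/2" x] x
    unfolding E_def prim_ln_div_def by simp
  moreover have "integral {x..\<theta> * x} (\<lambda>t. (ln t - ln x) * (\<Phi> t / t))
      = integral {x..\<theta> * x} (\<lambda>t. ln t * \<Phi> t / t - ln x * (\<Phi> t / t))"
    by (rule integral_cong) (simp add: algebra_simps)
  moreover have "\<dots> = integral {x..\<theta> * x} (\<lambda>t. ln t * \<Phi> t / t) - integral {x..\<theta> * x} (\<lambda>t. ln x * (\<Phi> t / t))"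
    by (rule integral_diff[OF integrable_on_ln_div integrable_on_mult_right[OF integrable_on_div]]) (use x in auto)
  moreover have "integral {x..\<theta> * x} (\<lambda>t. ln x * (\<Phi> t / t)) = ln x * integral {x..\<theta> * x} (\<lambda>t. \<Phi> t / t)"
    by (rule integral_mult_right)
  ultimately show ?thesis
    using D_eq_window_integral[of x] x by (simp add: window_integral_def)
qed

lemma abs_div_le: "0 < x \<Longrightarrow> x \<le> t \<Longrightarrow> \<bar>\<Phi> t / t\<bar> \<le> C / x"
  unfolding abs_divide by (rule frac_le) (use bound_nonneg bounded in auto)

lemma abs_D_le:
  assumes x: "1 \<le> x"
  shows "\<bar>D x\<bar> \<le> C * (\<theta> - 1)"
proof -
  have "\<bar>integral {x..\<theta> * x} (\<lambda>t. \<Phi> t / t)\<bar> \<le> C / x * (\<theta> * x - x)"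
    by (rule abs_integral_le) (use x integrable_on_div abs_div_le le_\<theta>_mult[of x] bound_nonneg in auto)
  moreover have "C / x * (\<theta> * x - x) = C * (\<theta> - 1)" using x by (simp add: field_simps)
  ultimately show ?thesis
    using x D_eq_window_integral[of x] by (simp add: window_integral_def)
qed

lemma abs_E_minus_ln_mult_D_le:
  assumes x: "1 \<le> x"
  shows "\<bar>E x - ln x * D x\<bar> \<le> ln \<theta> * (C * (\<theta> - 1))"
proof -
  have "\<bar>integral {x..\<theta> * x} (\<lambda>t. (ln t - ln x) * (\<Phi> t / t))\<bar> \<le> (ln \<theta> * (C / x)) * (\<theta> * x - x)"
  proof (rule abs_integral_le)
    show "(\<lambda>t. (ln t - ln x) * (\<Phi> t / t)) integrable_on {x..\<theta> * x}"
      by (rule integrable_continuous_interval)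
         (intro continuous_intros continuous_on_subset[OF continuous_on_div], use x in auto)
    fix t assume t: "t \<in> {x..\<theta> * x}"
    then have "0 < t" using x by auto
    then have "ln x \<le> ln t" "ln t \<le> ln (\<theta> * x)" using t x by auto
    then have "\<bar>ln t - ln x\<bar> \<le> ln \<theta>"
      using x \<theta>_gt_1 ln_mult[of \<theta> x] by auto
    with abs_div_le[of x t] t x ln_\<theta>_pos show "\<bar>(ln t - ln x) * (\<Phi> t / t)\<bar> \<le> ln \<theta> * (C / x)"
      unfolding abs_mult by (intro mult_mono) auto
  qed (use x le_\<theta>_mult[of x] ln_\<theta>_pos bound_nonneg in auto)
  also have "(ln \<theta> * (C / x)) * (\<theta> * x - x) = ln \<theta> * (C * (\<theta> - 1))"
    using x by (simp add: field_simps)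
  finally show ?thesis unfolding E_minus_ln_mult_D[OF x] .
qed

lemma abs_H_le:
  assumes x: "1 \<le> x"
  shows "\<bar>H x\<bar> \<le> 2 * (C * (\<theta> - 1))"
proof -
  have "\<bar>(E x - ln x * D x) / ln \<theta>\<bar> \<le> C * (\<theta> - 1)"
    using abs_E_minus_ln_mult_D_le[OF x] ln_\<theta>_pos by (simp add: abs_divide divide_le_eq mult_ac)
  have "\<bar>H x\<bar> \<le> \<bar>D x\<bar> + \<bar>(E x - ln x * D x) / ln \<theta>\<bar>"
    unfolding H_def by (rule abs_triangle_ineq4)
  also have "\<dots> \<le> C * (\<theta> - 1) + C * (\<theta> - 1)"
    by (rule add_mono[OF abs_D_le[OF x]]) fact
  finally show ?thesis by simp
qed

lemma continuous_on_H: "continuous_on {1..} H"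
proof -
  have "continuous_on {1..} D" "continuous_on {1..} E"
    by (auto intro!: continuous_at_imp_continuous_on DERIV_isCont has_derivative_D has_derivative_E)
  then show ?thesis
    unfolding H_def[abs_def] by (intro continuous_intros) (use ln_\<theta>_pos in auto)
qed

lemma continuous_on_G: "continuous_on {1..} G"
proof -
  have "continuous_on {1..} D"
    by (auto intro!: continuous_at_imp_continuous_on DERIV_isCont has_derivative_D)
  then show ?thesis
    unfolding G_def[abs_def]
    by (intro continuous_intros continuous_on_H continuous_on_subset[OF continuous]) (use ln_\<theta>_pos in auto)
qed

lemma abs_window_average_le:
  "1 \<le> x \<Longrightarrow> \<bar>window_integral \<Phi> \<theta> x / ln \<theta>\<bar> \<le> C * (\<theta> - 1) / ln \<theta>"
  using abs_D_le[of x] D_eq_window_integral[of x] ln_\<theta>_pos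
  by (simp add: abs_divide divide_right_mono)

lemma G_in_Linf: "G \<in> Linf"
proof (rule Linf_continuous_boundedI[OF continuous_on_G])
  fix x :: real assume x: "1 \<le> x"
  have "\<bar>D x / ln \<theta>\<bar> \<le> C * (\<theta> - 1) / ln \<theta>"
    using abs_window_average_le[OF x] D_eq_window_integral[of x] x by simp
  then show "\<bar>G x\<bar> \<le> 2 * (C * (\<theta> - 1)) + C * (\<theta> - 1) / ln \<theta> + C"
    using abs_H_le[OF x] bounded[of x] unfolding G_def by linarith
qed

lemma window_average_in_Linf: "(\<lambda>x. window_integral \<Phi> \<theta> x / ln \<theta>) \<in> Linf"
proof (rule Linf_cong)
  have "continuous_on {1..} D"
    by (auto intro!: continuous_at_imp_continuous_on DERIV_isCont has_derivative_D)
  then show "(\<lambda>x. D x / ln \<theta>) \<in> Linf"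
    by (rule Linf_continuous_boundedI[OF continuous_on_divide[OF _ continuous_on_const]])
       (use abs_window_average_le D_eq_window_integral ln_\<theta>_pos in auto)
qed (simp add: D_eq_window_integral)

lemma Uop_G:
  assumes x: "1 \<le> x"
  shows "Uop G x = H x - H 1 / x"
proof -
  have "(G has_integral (x * H x - 1 * H 1)) {1..x}"
  proof (rule fundamental_theorem_of_calculus[OF x])
    fix t assume "t \<in> {1..x}"
    then have "1 / 2 < t" by simp
    from has_field_derivative_at_within[OF has_derivative_mult_H[OF this]]
    show "((\<lambda>x. x * H x) has_vector_derivative G t) (at t within {1..x})"
      by (simp add: has_real_derivative_iff_has_vector_derivative)
  qed
  then have "integral {1..x} G = x * H x - H 1" by (simp add: integral_unique)
  moreover have "integral\<^sup>L (lebesgue_on {1..x}) G = integral {1..x} G"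
    by (rule lebesgue_integral_eq_integral[OF continuous_imp_integrable_real sets_lebesgue_Icc])
       (rule continuous_on_subset[OF continuous_on_G], auto)
  ultimately show ?thesis
    using x unfolding Uop_def by (simp add: field_simps)
qed

lemma window_average_coboundary:
  "1 \<le> x \<Longrightarrow> window_integral \<Phi> \<theta> x / ln \<theta> - \<Phi> x = G x - Uop G x - H 1 / x"
  using Uop_G[of x] D_eq_window_integral[of x] by (simp add: G_def)

end

section \<open>Dominated and invariant means\<close>

lemma lebesgue_integral_cong_AE_Rplus:
  fixes f g k :: "real \<Rightarrow> real"
  assumes f: "f \<in> borel_measurable Rplus" and g: "g \<in> borel_measurable Rplus"
    and ae: "AE x in Rplus. f x = g x" and a: "1 \<le> a" and k: "k \<in> borel_measurable borel"
  shows "integral\<^sup>L (lebesgue_on {a..b}) (\<lambda>t. f t / k t) = integral\<^sup>L (lebesgue_on {a..b}) (\<lambda>t. g t / k t)"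
proof (rule integral_cong_AE)
  have "{a..b} \<subseteq> {1..}" using a by auto
  then have "f \<in> borel_measurable (lebesgue_on {a..b})" "g \<in> borel_measurable (lebesgue_on {a..b})"
    using measurable_restrict_mono f g by blast+
  moreover have "k \<in> borel_measurable (lebesgue_on {a..b})" by (rule borel_measurable_lebesgue_onI[OF k])
  ultimately show "(\<lambda>t. f t / k t) \<in> borel_measurable (lebesgue_on {a..b})"
    "(\<lambda>t. g t / k t) \<in> borel_measurable (lebesgue_on {a..b})"
    by (simp_all add: borel_measurable_divide)
  show "AE t in lebesgue_on {a..b}. f t / k t = g t / k t"
    using AE_lebesgue_on_Icc_if_AE_Rplus[OF ae a] by eventually_elim simp
qed

lemma Uop_cong_AE:
  assumes "f \<in> borel_measurable Rplus" "g \<in> borel_measurable Rplus" "AE x in Rplus. f x = g x"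
  shows "Uop f = Uop g"
  using lebesgue_integral_cong_AE_Rplus[OF assms, of 1 "\<lambda>_. 1"] by (auto simp: Uop_def)

lemma Lbar1_cong_AE:
  assumes "f \<in> borel_measurable Rplus" "g \<in> borel_measurable Rplus" "AE x in Rplus. f x = g x"
  shows "Lbar1 f = Lbar1 g"
proof -
  have windows: "\<forall>\<^sub>F x in at_top. integral\<^sup>L (lebesgue_on {x..\<theta> * x}) (\<lambda>t. f t / t)
      = integral\<^sup>L (lebesgue_on {x..\<theta> * x}) (\<lambda>t. g t / t)" for \<theta> :: real
    using eventually_ge_at_top[of 1]
    by eventually_elim (rule lebesgue_integral_cong_AE_Rplus[OF assms], simp_all)
  have "Limsup at_top (\<lambda>x. ereal (1 / ln \<theta> * integral\<^sup>L (lebesgue_on {x..\<theta> * x}) (\<lambda>t. f t / t)))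
      = Limsup at_top (\<lambda>x. ereal (1 / ln \<theta> * integral\<^sup>L (lebesgue_on {x..\<theta> * x}) (\<lambda>t. g t / t)))"
    for \<theta> :: real
    by (rule Limsup_eq) (use windows[of \<theta>] in \<open>auto elim: eventually_mono\<close>)
  then show ?thesis
    unfolding Lbar1_def by simp
qed

lemma Linf_Uop:
  assumes f: "f \<in> Linf"
  shows "Uop f \<in> Linf"
proof -
  obtain g C where g: "g \<in> borel_measurable borel" "\<And>x. \<bar>g x\<bar> \<le> C" "AE x in Rplus. f x = g x"
    using Linf_obtain_bounded_borel[OF f] by blast
  interpret bounded_borel g C by unfold_locales (use g in auto)
  have "Uop f = Uop g"
    using Uop_cong_AE[OF _ borel_measurable_lebesgue_onI[OF g(1)] g(3)] f by (simp add: Linf_def)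
  then show ?thesis using Uop_in_Linf by simp
qed

lemma (in bounded_borel) Lbar1_diff_Uop:
  shows "Lbar1 (\<lambda>x. g x - Uop g x) = 0" and "Lbar1 (\<lambda>x. - (g x - Uop g x)) = 0"
proof -
  have window: "\<bar>integral\<^sup>L (lebesgue_on {x..\<theta> * x}) (\<lambda>t. (g t - Uop g t) / t)\<bar> \<le> 2 * C"
    if "1 < \<theta>" "1 \<le> x" for \<theta> x
  proof -
    have "x \<le> \<theta> * x" using that by simp
    with lebesgue_integral_diff_Uop_divide[OF \<open>1 \<le> x\<close> this] show ?thesis
      using abs_Uop_le[of x] abs_Uop_le[of "\<theta> * x"] by linarith
  qed
  show "Lbar1 (\<lambda>x. g x - Uop g x) = 0"
    by (rule Lbar1_eq_0_if_windows_bounded) (rule window)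
  show "Lbar1 (\<lambda>x. - (g x - Uop g x)) = 0"
  proof (rule Lbar1_eq_0_if_windows_bounded)
    fix \<theta> x :: real assume "1 < \<theta>" "1 \<le> x"
    have "integral\<^sup>L (lebesgue_on {x..\<theta> * x}) (\<lambda>t. - (g t - Uop g t) / t)
        = - integral\<^sup>L (lebesgue_on {x..\<theta> * x}) (\<lambda>t. (g t - Uop g t) / t)"
      by (simp flip: integral_minus add: minus_divide_left)
    then show "\<bar>integral\<^sup>L (lebesgue_on {x..\<theta> * x}) (\<lambda>t. - (g t - Uop g t) / t)\<bar> \<le> 2 * C"
      using window[OF \<open>1 < \<theta>\<close> \<open>1 \<le> x\<close>] by simp
  qed
qed

lemma (in mean) L1_means_eq_0:
  assumes "\<psi> \<in> L1_means" "h \<in> Linf" "Lbar1 h = 0" "Lbar1 (\<lambda>x. - h x) = 0"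
  shows "\<psi> h = 0"
proof -
  have "\<psi> (\<lambda>x. - h x) = - \<psi> h" using cmult[OF assms(2), of "-1"] by simp
  moreover have "ereal (\<psi> h) \<le> 0" "ereal (\<psi> (\<lambda>x. - h x)) \<le> 0"
    using assms Linf_cmult[OF assms(2), of "-1"] by (auto simp: L1_means_def)
  ultimately show ?thesis by simp
qed

lemma (in mean) L1_means_diff_Uop_eq_0:
  assumes \<psi>: "\<psi> \<in> L1_means" and f: "f \<in> Linf"
  shows "\<psi> (\<lambda>x. f x - Uop f x) = 0"
proof -
  obtain g C where g: "g \<in> borel_measurable borel" "\<And>x. \<bar>g x\<bar> \<le> C" "AE x in Rplus. f x = g x"
    using Linf_obtain_bounded_borel[OF f] by blast
  interpret bounded_borel g C by unfold_locales (use g in auto)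
  have "Uop f = Uop g"
    using Uop_cong_AE[OF _ borel_measurable_lebesgue_onI[OF g(1)] g(3)] f by (simp add: Linf_def)
  then have "\<psi> (\<lambda>x. f x - Uop f x) = \<psi> (\<lambda>x. g x - Uop g x)"
    using g(3) f in_Linf Uop_in_Linf
    by (intro cong_AE) (auto intro: Linf_diff elim: eventually_mono)
  also have "\<dots> = 0"
    by (rule L1_means_eq_0[OF \<psi> Linf_diff[OF in_Linf Uop_in_Linf] Lbar1_diff_Uop])
  finally show ?thesis .
qed

locale invariant_mean = mean +
  assumes Uop_invariant: "\<And>f. f \<in> Linf \<Longrightarrow> \<psi> (Uop f) = \<psi> f"
begin

lemma inverse_eq_0: "\<psi> (\<lambda>x. 1 / x) = 0"
proof -
  interpret one: bounded_borel "\<lambda>_. 1" 1 by unfold_locales auto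
  have "Uop (\<lambda>_. 1) x = 1 - 1 / x" if "1 \<le> x" for x
    using that by (simp add: one.Uop_eq one.prim_def field_simps)
  then have "\<psi> (Uop (\<lambda>_. 1)) = \<psi> (\<lambda>x. 1 - 1 / x)"
    by (intro cong one.Uop_in_Linf)
  also have "\<dots> = 1 - \<psi> (\<lambda>x. 1 / x)"
    using diff[OF Linf_const Linf_inverse] const by simp
  finally show ?thesis using Uop_invariant[OF Linf_const] const by simp
qed

text \<open>Since \<open>\<psi> (\<lambda>x. 1 / x) = 0\<close>, a bounded function that is eventually \<open>\<le> c\<close>
  is dominated by \<open>c + K / x\<close>.\<close>

lemma le_if_eventually_le:
  assumes h: "h \<in> Linf" and M: "\<And>x. 1 \<le> x \<Longrightarrow> \<bar>h x\<bar> \<le> M"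
    and ev: "\<forall>\<^sub>F x in at_top. h x \<le> c"
  shows "\<psi> h \<le> c"
proof -
  obtain X where X: "1 \<le> X" "\<And>x. X \<le> x \<Longrightarrow> h x \<le> c"
    using ev unfolding eventually_at_top_linorder by (metis max.cobounded1 max.cobounded2 order_trans)
  define K where "K = (M + \<bar>c\<bar>) * X"
  have M0: "0 \<le> M" using M[of 1] by simp
  have "h x \<le> c + K * (1 / x)" if x: "1 \<le> x" for x
  proof (cases "X \<le> x")
    case True
    have "0 \<le> K * (1 / x)" using M0 X(1) x by (simp add: K_def)
    then show ?thesis using X(2)[OF True] by simp
  next
    case False
    then have "(M + \<bar>c\<bar>) * 1 \<le> (M + \<bar>c\<bar>) * (X / x)"
      using x M0 by (intro mult_left_mono) auto
    then show ?thesis using M[OF x] by (simp add: K_def abs_le_iff) linarith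
  qed
  then have "\<psi> h \<le> \<psi> (\<lambda>x. c + K * (1 / x))"
    by (intro mono h Linf_add Linf_const Linf_cmult Linf_inverse)
  also have "\<dots> = c"
    using add[OF Linf_const Linf_cmult[OF Linf_inverse]] cmult[OF Linf_inverse] inverse_eq_0 const
    by simp
  finally show ?thesis .
qed

lemma coboundary_eq_0:
  assumes G: "G \<in> Linf" and h: "\<And>x. 1 \<le> x \<Longrightarrow> h x = G x - Uop G x - c / x"
  shows "\<psi> h = 0"
proof -
  have "\<psi> h = \<psi> (\<lambda>x. (G x - Uop G x) - c * (1 / x))"
    using h by (intro cong[symmetric] Linf_diff Linf_cmult Linf_inverse Linf_Uop G) auto
  also have "\<dots> = 0"
    using diff[OF Linf_diff[OF G Linf_Uop[OF G]] Linf_cmult[OF Linf_inverse]]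
      diff[OF G Linf_Uop[OF G]] cmult[OF Linf_inverse] inverse_eq_0 Uop_invariant[OF G]
    by simp
  finally show ?thesis .
qed

lemma window_average_eq:
  assumes "continuous_on {0<..} \<Phi>" "\<And>x. \<bar>\<Phi> x\<bar> \<le> C" "1 < \<theta>"
  shows "\<psi> (\<lambda>x. window_integral \<Phi> \<theta> x / ln \<theta>) = \<psi> \<Phi>"
proof -
  interpret log_smoothing \<Phi> C \<theta> by unfold_locales fact+
  have "\<Phi> \<in> Linf"
    by (rule Linf_continuous_boundedI[OF continuous_on_subset[OF continuous] bounded]) auto
  moreover have "\<psi> (\<lambda>x. window_integral \<Phi> \<theta> x / ln \<theta> - \<Phi> x) = 0"
    by (rule coboundary_eq_0[OF G_in_Linf window_average_coboundary])
  ultimately show ?thesis using diff[OF window_average_in_Linf] by simp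
qed

lemma le_window_limsup:
  assumes "bounded_borel g C" and \<theta>: "1 < \<theta>"
  shows "\<psi> g \<le> (bounded_borel.window_limsup g \<theta> + 2 * C) / ln \<theta>"
proof -
  interpret bounded_borel g C by fact
  interpret avg: log_smoothing "Uop g" C \<theta>
    by unfold_locales (rule continuous_on_Uop, rule abs_Uop_le, rule \<theta>)
  have ln: "0 < ln \<theta>" using \<theta> by simp
  have g_eq: "\<psi> g = \<psi> (\<lambda>x. window_integral (Uop g) \<theta> x / ln \<theta>)"
    using Uop_invariant[OF in_Linf] window_average_eq[OF continuous_on_Uop abs_Uop_le \<theta>] by simp
  show ?thesis
  proof (rule field_le_epsilon)
    fix e :: real assume "0 < e"
    have "\<forall>\<^sub>F x in at_top. window_integral g \<theta> x < window_limsup \<theta> + e * ln \<theta>"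
      by (rule eventually_window_integral_less) (use \<theta> \<open>0 < e\<close> ln in auto)
    then have "\<forall>\<^sub>F x in at_top.
        window_integral (Uop g) \<theta> x / ln \<theta> \<le> (window_limsup \<theta> + 2 * C) / ln \<theta> + e"
      using eventually_ge_at_top[of 1]
    proof eventually_elim
      case (elim x)
      with window_integral_Uop_le[of x \<theta>] \<theta> have
        "window_integral (Uop g) \<theta> x \<le> (window_limsup \<theta> + 2 * C) + e * ln \<theta>" by simp
      then show ?case using ln by (simp add: field_simps)
    qed
    then show "\<psi> g \<le> (window_limsup \<theta> + 2 * C) / ln \<theta> + e"
      unfolding g_eq using le_if_eventually_le[OF avg.window_average_in_Linf avg.abs_window_average_le]
      by blast
  qed
qed

lemma le_Lbar1:
  assumes f: "f \<in> Linf"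
  shows "ereal (\<psi> f) \<le> Lbar1 f"
proof -
  obtain g C where g: "g \<in> borel_measurable borel" "\<And>x. \<bar>g x\<bar> \<le> C" "AE x in Rplus. f x = g x"
    using Linf_obtain_bounded_borel[OF f] by blast
  interpret bounded_borel g C by unfold_locales (use g in auto)
  obtain m where m: "((\<lambda>\<theta>. window_limsup \<theta> / ln \<theta>) \<longlongrightarrow> m) at_top"
    using window_limsup_divide_tendsto by blast
  have "((\<lambda>\<theta>. window_limsup \<theta> / ln \<theta> + 2 * C / ln \<theta>) \<longlongrightarrow> m + 0) at_top"
    by (intro tendsto_add m tendsto_divide_0[OF tendsto_const] filterlim_at_top_imp_at_infinity ln_at_top)
  moreover have "\<forall>\<^sub>F \<theta> in at_top. \<psi> g \<le> window_limsup \<theta> / ln \<theta> + 2 * C / ln \<theta>"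
    using eventually_gt_at_top[of 1]
    by eventually_elim (use le_window_limsup[OF bounded_borel_axioms] in \<open>simp add: add_divide_distrib\<close>)
  ultimately have "\<psi> g \<le> m"
    by (intro tendsto_lowerbound) auto
  moreover have "\<psi> f = \<psi> g"
    by (rule cong_AE[OF f in_Linf g(3)])
  moreover have "Lbar1 f = Lbar1 g"
    using Lbar1_cong_AE[OF _ borel_measurable_lebesgue_onI[OF g(1)] g(3)] f by (simp add: Linf_def)
  ultimately show ?thesis using Lbar1_eq_window_limsup_limit[OF m] by simp
qed

end

theorem theorem4p5:
  assumes "is_mean \<psi>"
  shows "(\<psi> \<in> L1_means \<longleftrightarrow> (\<forall>f\<in>Linf. \<psi> (\<lambda>x. f x - Uop f x) = 0))
       \<and> (\<psi> \<in> L1_means \<longleftrightarrow> (\<forall>f\<in>Linf. \<psi> (Uop f) = \<psi> f))"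
proof -
  interpret mean \<psi> by unfold_locales (rule assms)
  have invariant_iff: "(\<forall>f\<in>Linf. \<psi> (\<lambda>x. f x - Uop f x) = 0) \<longleftrightarrow> (\<forall>f\<in>Linf. \<psi> (Uop f) = \<psi> f)"
    using diff Linf_Uop by auto
  have "\<forall>f\<in>Linf. \<psi> (\<lambda>x. f x - Uop f x) = 0" if "\<psi> \<in> L1_means"
    using L1_means_diff_Uop_eq_0[OF that] by blast
  moreover have "\<psi> \<in> L1_means" if "\<forall>f\<in>Linf. \<psi> (Uop f) = \<psi> f"
  proof -
    interpret invariant_mean \<psi> by unfold_locales (use that in auto)
    show ?thesis using assms le_Lbar1 by (auto simp: L1_means_def)
  qed
  ultimately show ?thesis using invariant_iff by blast
qed

end
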